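(* Let $f:\mathbb{R}^d\times\mathcal{X}\to\mathbb{R}$ be differentiable in $\theta$, where $\mathcal{X}$ is a subset of a Euclidean space with $\sup_{x\in\mathcal{X}}\Vert x\Vert\le D<\infty$ and $\sup_{x\in\mathcal{X}}\Vert\nabla f(0,x)\Vert\le E<\infty$. Assume (A1): there are $K_1,K_2>0$ with $\Vert\nabla f(\theta,x)-\nabla f(\hat\theta,\hat x)\Vert\le K_1\Vert\theta-\hat\theta\Vert+K_2\Vert x-\hat x\Vert(\Vert\theta\Vert+\Vert\hat\theta\Vert+1)$ for all $\theta,\hat\theta\in\mathbb{R}^d$, $x,\hat x\in\mathcal{X}$; (A2): there is $\mu>0$ with $\langle\nabla f(\theta_1,x)-\nabla f(\theta_2,x),\theta_1-\theta_2\rangle\ge\mu\Vert\theta_1-\theta_2\Vert^2$ for all $\theta_1,\theta_2\in\mathbb{R}^d$, $x\in\mathcal{X}$. Let $X_n=(x_1,\dots,x_n)$, $\hat X_n=(\hat x_1,\dots,\hat x_n)\in\mathcal{X}^n$ differ in at most one index, $b\in\{1,\dots,n\}$, $(\Omega_k)_{k\ge1}$ i.i.d. uniformly random $b$-subsets of $\{1,\dots,n\}$, and $$\theta_k=\theta_{k-1}-\tfrac\eta b\textstyle\sum_{i\in\Omega_k}\nabla f(\theta_{k-1},x_i),\qquad\hat\theta_k=\hat\theta_{k-1}-\tfrac\eta b\sum_{i\in\Omega_k}\nabla f(\hat\theta_{k-1},\hat x_i),$$ with $\theta_0=\hat\theta_0=\theta\in\mathbb{R}^d$. Assume $\eta<\min\left\{\frac1\mu,\frac{\mu}{K_1^2+64D^2K_2^2}\right\}$.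 Let $\nu_k,\hat\nu_k$ be the laws of $\theta_k,\hat\theta_k$. Then for all $k$, $$\mathcal{W}_1(\nu_k,\hat\nu_k)\le\frac{8DK_2\left(1-(1-\frac{\eta\mu}2)^k\right)}{n\mu}\left(\frac{2E}\mu+1\right)\max\left\{1+2\Vert\theta\Vert^2+\frac{2E^2}{\mu^2},\ 2-\frac\eta\mu K_1^2-\frac{56\eta}{\mu}D^2K_2^2+\frac{64\eta}{\mu^3}D^2K_2^2E^2\right\}.$$
   Context: $\mathcal{W}_1$ is the 1-Wasserstein distance between probability measures on $\mathbb{R}^d$. *)

theory Defs
  imports "HOL-Probability.Probability"
begin

definition couplings :: "'a::euclidean_space measure \<Rightarrow> 'a measure \<Rightarrow> ('a \<times> 'a) measure set" where
  "couplings M N = {\<pi>. prob_space \<pi> \<and> sets \<pi> = sets (borel :: ('a \<times> 'a) measure) \<and>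
      (\<forall>A \<in> sets (borel :: 'a measure).
         emeasure \<pi> (fst -` A) = emeasure M A \<and> emeasure \<pi> (snd -` A) = emeasure N A)}"

definition W1 :: "'a::euclidean_space measure \<Rightarrow> 'a measure \<Rightarrow> ennreal" where
  "W1 M N = (INF \<pi> \<in> couplings M N. \<integral>\<^sup>+ z. ennreal (dist (fst z) (snd z)) \<partial>\<pi>)"

definition bsubsets :: "nat \<Rightarrow> nat \<Rightarrow> nat set set" where
  "bsubsets n b = {\<Omega>. \<Omega> \<subseteq> {1..n} \<and> card \<Omega> = b}"

definition sgd_step :: "('a::euclidean_space \<Rightarrow> 'x \<Rightarrow> 'a) \<Rightarrow> (nat \<Rightarrow> 'x) \<Rightarrow> real \<Rightarrow> nat
    \<Rightarrow> 'a \<Rightarrow> nat set \<Rightarrow> 'a" where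
  "sgd_step g xs \<eta> b t \<Omega> = t - (\<eta> / real b) *\<^sub>R (\<Sum>i\<in>\<Omega>. g t (xs i))"

text \<open>Law of theta_k: the batches (\<Omega>_1,...,\<Omega>_k) are i.i.d. uniform on b-subsets of {1..n},
i.e. uniform on the set of length-k lists of b-subsets; theta_k is the k-fold iterate.\<close>
definition sgd_law :: "('a::euclidean_space \<Rightarrow> 'x \<Rightarrow> 'a) \<Rightarrow> (nat \<Rightarrow> 'x) \<Rightarrow> real \<Rightarrow> nat \<Rightarrow> nat
    \<Rightarrow> 'a \<Rightarrow> nat \<Rightarrow> 'a measure" where
  "sgd_law g xs \<eta> n b \<theta> k = measure_pmf (map_pmf (\<lambda>ws. foldl (sgd_step g xs \<eta> b) \<theta> ws)
      (pmf_of_set {ws. length ws = k \<and> set ws \<subseteq> bsubsets n b}))"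

end

theory Submission
  imports Defs
begin

text \<open>Couple the two chains by running them on the same batches, so that \<open>W\<^sub>1\<close> is at most
the mean of \<open>\<parallel>\<theta>\<^sub>k - \<theta>'\<^sub>k\<parallel>\<close> over all batch sequences. On identical data one SGD step is a
\<open>(1 - \<eta>\<mu>/2)\<close>-contraction (strong monotonicity and Lipschitz continuity of the averaged
gradient); this also keeps every iterate in the ball of radius \<open>\<parallel>\<theta>\<parallel> + 2E/\<mu>\<close>. The data differ
only at one index \<open>j\<close>, which lies in a fraction \<open>b/n\<close> of the batches and then perturbs the step
by at most \<open>(\<eta>/b) 2DK\<^sub>2(2\<parallel>\<theta>'\<^sub>k\<parallel> + 1) \<le> (\<eta>/b) C\<close>, where \<open>C = 2DK\<^sub>2(2(\<parallel>\<theta>\<parallel> + 2E/\<mu>) + 1)\<close>.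
So the mean distance obeys \<open>e\<^sub>k\<^sub>+\<^sub>1 \<le> (1 - \<eta>\<mu>/2) e\<^sub>k + \<eta>C/n\<close>, whence
\<open>e\<^sub>k \<le> 2C(1 - (1 - \<eta>\<mu>/2)\<^sup>k)/(n\<mu>)\<close>.\<close>

lemma W1_map_pmf_le:
  fixes g g' :: "'b \<Rightarrow> 'a::euclidean_space"
  shows "W1 (measure_pmf (map_pmf g P)) (measure_pmf (map_pmf g' P))
         \<le> \<integral>\<^sup>+ \<omega>. ennreal (dist (g \<omega>) (g' \<omega>)) \<partial>measure_pmf P"
proof -
  define h where "h = (\<lambda>\<omega>. (g \<omega>, g' \<omega>))"
  define \<pi> where "\<pi> = distr (measure_pmf P) (borel :: ('a \<times> 'a) measure) h"
  have h: "h \<in> measure_pmf P \<rightarrow>\<^sub>M borel" by simp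
  have fst: "fst -` A \<in> sets (borel :: ('a \<times> 'a) measure)"
    and snd: "snd -` A \<in> sets (borel :: ('a \<times> 'a) measure)" if "A \<in> sets borel" for A :: "'a set"
    using that by (metis borel_prod measurable_fst measurable_sets_borel,
                   metis borel_prod measurable_snd measurable_sets_borel)
  have "\<pi> \<in> couplings (measure_pmf (map_pmf g P)) (measure_pmf (map_pmf g' P))"
    unfolding couplings_def
  proof (intro CollectI conjI ballI)
    show "prob_space \<pi>"
      unfolding \<pi>_def by (rule prob_space.prob_space_distr[OF prob_space_measure_pmf h])
    show "sets \<pi> = sets borel" unfolding \<pi>_def by simp
  next
    fix A :: "'a set" assume A: "A \<in> sets borel"
    show "emeasure \<pi> (fst -` A) = emeasure (measure_pmf (map_pmf g P)) A"
      unfolding \<pi>_def map_pmf_rep_eq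
      by (subst emeasure_distr[OF h fst[OF A]], subst emeasure_distr) (auto simp: h_def vimage_def)
    show "emeasure \<pi> (snd -` A) = emeasure (measure_pmf (map_pmf g' P)) A"
      unfolding \<pi>_def map_pmf_rep_eq
      by (subst emeasure_distr[OF h snd[OF A]], subst emeasure_distr) (auto simp: h_def vimage_def)
  qed
  then have "W1 (measure_pmf (map_pmf g P)) (measure_pmf (map_pmf g' P))
        \<le> \<integral>\<^sup>+ z. ennreal (dist (fst z) (snd z)) \<partial>\<pi>"
    unfolding W1_def by (rule INF_lower)
  also have "\<dots> = \<integral>\<^sup>+ \<omega>. ennreal (dist (g \<omega>) (g' \<omega>)) \<partial>measure_pmf P"
    unfolding \<pi>_def
    by (subst nn_integral_distr[OF h])
      (auto simp: h_def intro!: borel_measurable_continuous_onI continuous_intros)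
  finally show ?thesis .
qed

lemma gradient_step_contraction:
  fixes G :: "'a::real_inner \<Rightarrow> 'a"
  assumes mono: "\<mu> * (norm (u - v))\<^sup>2 \<le> (G u - G v) \<bullet> (u - v)"
    and lip: "norm (G u - G v) \<le> K * norm (u - v)"
    and "0 \<le> \<eta>" "\<eta> * K\<^sup>2 \<le> \<mu>" "\<eta> * \<mu> \<le> 2"
  shows "norm ((u - \<eta> *\<^sub>R G u) - (v - \<eta> *\<^sub>R G v)) \<le> (1 - \<eta> * \<mu> / 2) * norm (u - v)"
proof -
  define \<delta> where "\<delta> = u - v"
  define \<gamma> where "\<gamma> = G u - G v"
  have "(norm \<gamma>)\<^sup>2 \<le> K\<^sup>2 * (norm \<delta>)\<^sup>2"
    using lip norm_ge_zero[of \<gamma>] unfolding \<gamma>_def \<delta>_def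
    by (metis power_mono power_mult_distrib)
  then have "\<eta>\<^sup>2 * (norm \<gamma>)\<^sup>2 \<le> \<eta> * (\<eta> * K\<^sup>2) * (norm \<delta>)\<^sup>2"
    using \<open>0 \<le> \<eta>\<close> by (simp add: mult_left_mono power2_eq_square mult.assoc)
  also have "\<dots> \<le> \<eta> * \<mu> * (norm \<delta>)\<^sup>2"
    using assms(3,4) by (intro mult_right_mono mult_left_mono) auto
  finally have second_order: "\<eta>\<^sup>2 * (norm \<gamma>)\<^sup>2 \<le> \<eta> * \<mu> * (norm \<delta>)\<^sup>2" .
  have first_order: "\<eta> * (\<mu> * (norm \<delta>)\<^sup>2) \<le> \<eta> * (\<gamma> \<bullet> \<delta>)"
    using mono \<open>0 \<le> \<eta>\<close> unfolding \<gamma>_def \<delta>_def by (rule mult_left_mono)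
  have "(norm ((u - \<eta> *\<^sub>R G u) - (v - \<eta> *\<^sub>R G v)))\<^sup>2 = (norm (\<delta> - \<eta> *\<^sub>R \<gamma>))\<^sup>2"
    by (simp add: \<delta>_def \<gamma>_def algebra_simps)
  also have "\<dots> = (norm \<delta>)\<^sup>2 - 2 * \<eta> * (\<gamma> \<bullet> \<delta>) + \<eta>\<^sup>2 * (norm \<gamma>)\<^sup>2"
    unfolding power2_norm_eq_inner
    by (simp add: inner_diff_left inner_diff_right inner_commute power2_eq_square algebra_simps)
  also have "\<dots> \<le> (1 - \<eta> * \<mu>) * (norm \<delta>)\<^sup>2"
    using first_order second_order by (simp add: algebra_simps)
  also have "\<dots> \<le> (1 - \<eta> * \<mu>) * (norm \<delta>)\<^sup>2 + (\<eta> * \<mu> / 2 * norm \<delta>)\<^sup>2"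
    by simp
  also have "\<dots> = ((1 - \<eta> * \<mu> / 2) * norm \<delta>)\<^sup>2"
    by (simp add: power2_eq_square algebra_simps)
  finally show ?thesis
    unfolding \<delta>_def by (rule power2_le_imp_le) (use \<open>\<eta> * \<mu> \<le> 2\<close> in simp)
qed

lemma finite_bsubsets: "finite (bsubsets n b)"
  unfolding bsubsets_def by (rule finite_subset[of _ "Pow {1..n}"]) auto

lemma atLeastAtMost_in_bsubsets: "b \<le> n \<Longrightarrow> {1..b} \<in> bsubsets n b"
  unfolding bsubsets_def by auto

lemma card_bsubsets_containing_le:
  assumes "0 < b"
  shows "n * card {W \<in> bsubsets n b. j \<in> W} \<le> b * card (bsubsets n b)"
proof (cases "j \<in> {1..n}")
  case False
  then have "{W \<in> bsubsets n b. j \<in> W} = {}" by (auto simp: bsubsets_def)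
  then have "card {W \<in> bsubsets n b. j \<in> W} = 0" by (simp only: card.empty)
  then show ?thesis by simp
next
  case True
  define R where "R = {B. B \<subseteq> {1..n} - {j} \<and> card B = b - 1}"
  have "{W \<in> bsubsets n b. j \<in> W} = insert j ` R"
  proof (intro equalityI subsetI)
    fix W assume W: "W \<in> {W \<in> bsubsets n b. j \<in> W}"
    then have "finite W" by (auto simp: bsubsets_def intro: finite_subset)
    with W have "W - {j} \<in> R" by (auto simp: bsubsets_def R_def)
    moreover have "W = insert j (W - {j})" using W by auto
    ultimately show "W \<in> insert j ` R" by blast
  next
    fix W assume "W \<in> insert j ` R"
    then obtain B where B: "B \<subseteq> {1..n} - {j}" "card B = b - 1" "W = insert j B"
      by (auto simp: R_def)
    moreover have "finite B" "j \<notin> B" using B(1) by (auto intro: finite_subset)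
    ultimately show "W \<in> {W \<in> bsubsets n b. j \<in> W}"
      using True \<open>0 < b\<close> by (auto simp: bsubsets_def)
  qed
  moreover have "inj_on (insert j) R"
    by (rule inj_onI) (auto simp: R_def insert_ident)
  ultimately have "card {W \<in> bsubsets n b. j \<in> W} = (n - 1) choose (b - 1)"
    using n_subsets[of "{1..n} - {j}" "b - 1"] True by (simp add: card_image R_def)
  moreover have "card (bsubsets n b) = n choose b"
    unfolding bsubsets_def using n_subsets[of "{1..n}" b] by simp
  ultimately show ?thesis
    using times_binomial_minus1_eq[OF \<open>0 < b\<close>, of n] by simp
qed

lemma sum_lists_length_Suc:
  assumes "finite S"
  shows "(\<Sum>ws\<in>{ws. length ws = Suc k \<and> set ws \<subseteq> S}. h ws)
       = (\<Sum>ws\<in>{ws. length ws = k \<and> set ws \<subseteq> S}. \<Sum>w\<in>S. h (ws @ [w]))"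
proof -
  have image: "{ws. length ws = Suc k \<and> set ws \<subseteq> S}
      = (\<lambda>(ws, w). ws @ [w]) ` ({ws. length ws = k \<and> set ws \<subseteq> S} \<times> S)"
  proof (intro equalityI subsetI)
    fix xs assume xs: "xs \<in> {ws. length ws = Suc k \<and> set ws \<subseteq> S}"
    then obtain ys y where "xs = ys @ [y]" by (cases xs rule: rev_cases) auto
    with xs show "xs \<in> (\<lambda>(ws, w). ws @ [w]) ` ({ws. length ws = k \<and> set ws \<subseteq> S} \<times> S)"
      by (auto intro!: image_eqI[of _ _ "(ys, y)"])
  qed auto
  have inj: "inj_on (\<lambda>(ws, w). ws @ [w]) ({ws. length ws = k \<and> set ws \<subseteq> S} \<times> S)"
    by (rule inj_onI) auto
  then show ?thesis
    unfolding image sum.reindex[OF inj] by (simp add: sum.cartesian_product split_beta comp_def)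
qed

locale strongly_monotone_sgd =
  fixes gradf :: "'a::euclidean_space \<Rightarrow> 'x::euclidean_space \<Rightarrow> 'a"
    and X :: "'x set" and D E K1 K2 \<mu> \<eta> :: real
  assumes X_nonempty: "X \<noteq> {}"
    and norm_le_D: "\<And>x. x \<in> X \<Longrightarrow> norm x \<le> D"
    and norm_gradf_0_le_E: "\<And>x. x \<in> X \<Longrightarrow> norm (gradf 0 x) \<le> E"
    and K2_nonneg: "0 \<le> K2"
    and gradf_lipschitz: "\<And>t t' x x'. x \<in> X \<Longrightarrow> x' \<in> X \<Longrightarrow>
          norm (gradf t x - gradf t' x') \<le> K1 * norm (t - t') + K2 * norm (x - x') * (norm t + norm t' + 1)"
    and mu_pos: "0 < \<mu>"
    and gradf_strongly_monotone: "\<And>t1 t2 x. x \<in> X \<Longrightarrow>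
          \<mu> * (norm (t1 - t2))\<^sup>2 \<le> (gradf t1 x - gradf t2 x) \<bullet> (t1 - t2)"
    and eta_pos: "0 < \<eta>"
    and eta_K1: "\<eta> * K1\<^sup>2 \<le> \<mu>"
    and eta_mu: "\<eta> * \<mu> \<le> 1"
begin

lemma D_nonneg: "0 \<le> D" and E_nonneg: "0 \<le> E"
  using X_nonempty norm_le_D norm_gradf_0_le_E by (meson ex_in_conv norm_ge_zero order_trans)+

lemma sgd_step_contraction:
  assumes W: "card W = b" "0 < b" and y: "\<forall>i\<in>W. y i \<in> X"
  shows "norm (sgd_step gradf y \<eta> b u W - sgd_step gradf y \<eta> b v W) \<le> (1 - \<eta> * \<mu> / 2) * norm (u - v)"
proof -
  define G where "G t = (1 / real b) *\<^sub>R (\<Sum>i\<in>W. gradf t (y i))" for t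
  have step: "sgd_step gradf y \<eta> b t W = t - \<eta> *\<^sub>R G t" for t
    by (simp add: sgd_step_def G_def)
  have diff: "G u - G v = (1 / real b) *\<^sub>R (\<Sum>i\<in>W. gradf u (y i) - gradf v (y i))"
    by (simp add: G_def sum_subtractf scaleR_diff_right)
  have "real b * (\<mu> * (norm (u - v))\<^sup>2) \<le> (\<Sum>i\<in>W. (gradf u (y i) - gradf v (y i)) \<bullet> (u - v))"
    using sum_mono[of W "\<lambda>_. \<mu> * (norm (u - v))\<^sup>2"] gradf_strongly_monotone y W(1) by simp
  then have mono: "\<mu> * (norm (u - v))\<^sup>2 \<le> (G u - G v) \<bullet> (u - v)"
    using W(2) unfolding diff by (simp add: inner_sum_left field_simps)
  have "norm (gradf u (y i) - gradf v (y i)) \<le> K1 * norm (u - v)" if "i \<in> W" for i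
    using gradf_lipschitz[of "y i" "y i" u v] y that by simp
  then have "norm (\<Sum>i\<in>W. gradf u (y i) - gradf v (y i)) \<le> (\<Sum>i\<in>W. K1 * norm (u - v))"
    by (rule sum_norm_le)
  then have lip: "norm (G u - G v) \<le> K1 * norm (u - v)"
    using W unfolding diff by (simp add: field_simps)
  show ?thesis
    unfolding step using gradient_step_contraction[OF mono lip] eta_pos eta_K1 eta_mu by simp
qed

lemma norm_sgd_step_le:
  assumes W: "card W = b" "0 < b" and y: "\<forall>i\<in>W. y i \<in> X"
  shows "norm (sgd_step gradf y \<eta> b u W) \<le> (1 - \<eta> * \<mu> / 2) * norm u + \<eta> * E"
proof -
  have "norm (\<Sum>i\<in>W. gradf 0 (y i)) \<le> real b * E"
    using sum_norm_le[of W "\<lambda>i. gradf 0 (y i)" "\<lambda>_. E"] norm_gradf_0_le_E y W(1) by simp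
  then have "norm (sgd_step gradf y \<eta> b 0 W) \<le> \<eta> * E"
    using W(2) eta_pos by (simp add: sgd_step_def field_simps)
  then show ?thesis
    using norm_triangle_sub[of "sgd_step gradf y \<eta> b u W" "sgd_step gradf y \<eta> b 0 W"]
      sgd_step_contraction[OF assms, of u 0] by simp
qed

lemma norm_sgd_iterate_le:
  assumes "0 < b" and y: "\<forall>i\<in>{1..n}. y i \<in> X" and "set ws \<subseteq> bsubsets n b"
  shows "norm (foldl (sgd_step gradf y \<eta> b) \<theta> ws) \<le> norm \<theta> + 2 * E / \<mu>"
  using \<open>set ws \<subseteq> bsubsets n b\<close>
proof (induction ws rule: rev_induct)
  case Nil
  then show ?case using mu_pos E_nonneg by simp
next
  case (snoc w ws)
  let ?u = "foldl (sgd_step gradf y \<eta> b) \<theta> ws"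
  have w: "card w = b" "\<forall>i\<in>w. y i \<in> X" using snoc.prems y by (auto simp: bsubsets_def)
  have "norm (sgd_step gradf y \<eta> b ?u w) \<le> (1 - \<eta> * \<mu> / 2) * norm ?u + \<eta> * E"
    by (rule norm_sgd_step_le[OF w(1) \<open>0 < b\<close> w(2)])
  also have "\<dots> \<le> (1 - \<eta> * \<mu> / 2) * (norm \<theta> + 2 * E / \<mu>) + \<eta> * E"
    using snoc eta_mu by (intro add_right_mono mult_left_mono) auto
  also have "\<dots> = norm \<theta> + 2 * E / \<mu> - \<eta> * \<mu> / 2 * norm \<theta>"
    using mu_pos by (simp add: field_simps)
  also have "\<dots> \<le> norm \<theta> + 2 * E / \<mu>"
    using eta_pos mu_pos by simp
  finally show ?case by simp
qed

lemma norm_sgd_step_data_diff: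
  assumes W: "card W = b" "0 < b" "W \<subseteq> {1..n}"
    and xs: "\<forall>i\<in>{1..n}. xs i \<in> X" and xs': "\<forall>i\<in>{1..n}. xs' i \<in> X"
    and j: "\<forall>i\<in>{1..n}. i \<noteq> j \<longrightarrow> xs i = xs' i"
  shows "norm (sgd_step gradf xs \<eta> b v W - sgd_step gradf xs' \<eta> b v W)
     \<le> \<eta> / real b * (if j \<in> W then 2 * D * K2 * (2 * norm v + 1) else 0)"
proof -
  have "norm (gradf v (xs i) - gradf v (xs' i)) \<le> (if i = j then 2 * D * K2 * (2 * norm v + 1) else 0)"
    if "i \<in> W" for i
  proof (cases "i = j")
    case True
    have X: "xs i \<in> X" "xs' i \<in> X" using xs xs' W(3) \<open>i \<in> W\<close> by auto
    then have "norm (xs i - xs' i) \<le> 2 * D"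
      using norm_le_D[OF X(1)] norm_le_D[OF X(2)] norm_triangle_ineq4[of "xs i" "xs' i"] by linarith
    have "norm (gradf v (xs i) - gradf v (xs' i)) \<le> K2 * norm (xs i - xs' i) * (2 * norm v + 1)"
      using gradf_lipschitz[OF X, of v v] by simp
    also have "\<dots> \<le> K2 * (2 * D) * (2 * norm v + 1)"
      using \<open>norm (xs i - xs' i) \<le> 2 * D\<close> K2_nonneg by (intro mult_right_mono mult_left_mono) auto
    finally show ?thesis using True by (simp add: mult_ac)
  qed (use j W(3) \<open>i \<in> W\<close> in auto)
  then have "norm (\<Sum>i\<in>W. gradf v (xs i) - gradf v (xs' i))
      \<le> (\<Sum>i\<in>W. if i = j then 2 * D * K2 * (2 * norm v + 1) else 0)"
    by (rule sum_norm_le)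
  also have "\<dots> = (if j \<in> W then 2 * D * K2 * (2 * norm v + 1) else 0)"
    using W(1,2) card_gt_0_iff[of W] by (simp add: sum.delta)
  finally have "\<eta> / real b * norm (\<Sum>i\<in>W. gradf v (xs i) - gradf v (xs' i))
      \<le> \<eta> / real b * (if j \<in> W then 2 * D * K2 * (2 * norm v + 1) else 0)"
    using eta_pos by (intro mult_left_mono) auto
  moreover have "sgd_step gradf xs \<eta> b v W - sgd_step gradf xs' \<eta> b v W
      = - ((\<eta> / real b) *\<^sub>R (\<Sum>i\<in>W. gradf v (xs i) - gradf v (xs' i)))"
    unfolding sgd_step_def by (simp add: sum_subtractf scaleR_diff_right)
  ultimately show ?thesis
    using eta_pos by simp
qed

lemma sum_bsubsets_sgd_step_dist_le:
  assumes b: "0 < b" "b \<le> n"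
    and xs: "\<forall>i\<in>{1..n}. xs i \<in> X" and xs': "\<forall>i\<in>{1..n}. xs' i \<in> X"
    and j: "\<forall>i\<in>{1..n}. i \<noteq> j \<longrightarrow> xs i = xs' i"
    and v: "norm v \<le> M"
  shows "(\<Sum>W\<in>bsubsets n b. norm (sgd_step gradf xs \<eta> b u W - sgd_step gradf xs' \<eta> b v W))
    \<le> real (card (bsubsets n b)) * ((1 - \<eta> * \<mu> / 2) * norm (u - v) + \<eta> * (2 * D * K2 * (2 * M + 1)) / real n)"
proof -
  define S where "S = bsubsets n b"
  define C where "C = 2 * D * K2 * (2 * M + 1)"
  have "0 \<le> M" using v norm_ge_zero[of v] by linarith
  then have C_nonneg: "0 \<le> C"
    unfolding C_def using D_nonneg K2_nonneg by (intro mult_nonneg_nonneg) auto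
  have "norm (sgd_step gradf xs \<eta> b u W - sgd_step gradf xs' \<eta> b v W)
      \<le> (1 - \<eta> * \<mu> / 2) * norm (u - v) + \<eta> / real b * (if j \<in> W then C else 0)" if "W \<in> S" for W
  proof -
    have W: "card W = b" "W \<subseteq> {1..n}" using that by (auto simp: S_def bsubsets_def)
    have "2 * D * K2 * (2 * norm v + 1) \<le> C"
      unfolding C_def using v D_nonneg K2_nonneg by (intro mult_left_mono) auto
    then have "\<eta> / real b * (if j \<in> W then 2 * D * K2 * (2 * norm v + 1) else 0)
        \<le> \<eta> / real b * (if j \<in> W then C else 0)"
      using eta_pos by (intro mult_left_mono) auto
    then show ?thesis
      using sgd_step_contraction[OF W(1) b(1), of xs u v] xs W(2)
        norm_sgd_step_data_diff[OF W(1) b(1) W(2) xs xs' j, of v]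
      by (intro norm_diff_triangle_le[of _ "sgd_step gradf xs \<eta> b v W"]) auto
  qed
  then have "(\<Sum>W\<in>S. norm (sgd_step gradf xs \<eta> b u W - sgd_step gradf xs' \<eta> b v W))
      \<le> (\<Sum>W\<in>S. (1 - \<eta> * \<mu> / 2) * norm (u - v) + \<eta> / real b * (if j \<in> W then C else 0))"
    by (rule sum_mono)
  also have "\<dots> = real (card S) * ((1 - \<eta> * \<mu> / 2) * norm (u - v))
      + \<eta> / real b * (\<Sum>W\<in>S. if j \<in> W then C else 0)"
    by (simp add: sum.distrib sum_distrib_left)
  also have "\<dots> = real (card S) * ((1 - \<eta> * \<mu> / 2) * norm (u - v))
      + \<eta> / real b * C * real (card {W \<in> S. j \<in> W})"
    using sum.inter_filter[of S "\<lambda>_. C" "\<lambda>W. j \<in> W"] finite_bsubsets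
    by (simp add: S_def mult.commute)
  also have "\<dots> \<le> real (card S) * ((1 - \<eta> * \<mu> / 2) * norm (u - v) + \<eta> * C / real n)"
  proof -
    have "real n * real (card {W \<in> S. j \<in> W}) \<le> real b * real (card S)"
      using card_bsubsets_containing_le[OF b(1), of n j] unfolding S_def of_nat_mult[symmetric]
      by (rule of_nat_mono)
    then have "\<eta> * C / (real b * real n) * (real n * real (card {W \<in> S. j \<in> W}))
        \<le> \<eta> * C / (real b * real n) * (real b * real (card S))"
      using eta_pos C_nonneg by (intro mult_left_mono) auto
    then show ?thesis
      using b by (simp add: field_simps)
  qed
  finally show ?thesis unfolding S_def C_def .
qed

lemma sum_sgd_iterates_dist_le:
  assumes b: "0 < b" "b \<le> n"
    and xs: "\<forall>i\<in>{1..n}. xs i \<in> X" and xs': "\<forall>i\<in>{1..n}. xs' i \<in> X"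
    and j: "\<forall>i\<in>{1..n}. i \<noteq> j \<longrightarrow> xs i = xs' i"
  shows "(\<Sum>ws\<in>{ws. length ws = k \<and> set ws \<subseteq> bsubsets n b}.
           norm (foldl (sgd_step gradf xs \<eta> b) \<theta> ws - foldl (sgd_step gradf xs' \<eta> b) \<theta> ws))
    \<le> real (card (bsubsets n b)) ^ k *
       (8 * D * K2 * (1 - (1 - \<eta> * \<mu> / 2) ^ k) / (real n * \<mu>) * (norm \<theta> + 2 * E / \<mu> + 1 / 2))"
proof (induction k)
  case 0
  then show ?case by simp
next
  case (Suc k)
  define S where "S = bsubsets n b"
  define L where "L = {ws. length ws = k \<and> set ws \<subseteq> S}"
  define F where "F = foldl (sgd_step gradf xs \<eta> b) \<theta>"
  define F' where "F' = foldl (sgd_step gradf xs' \<eta> b) \<theta>"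
  define N where "N = real (card S)"
  define \<rho> where "\<rho> = 1 - \<eta> * \<mu> / 2"
  define C where "C = 2 * D * K2 * (2 * (norm \<theta> + 2 * E / \<mu>) + 1)"
  define B where "B k = 8 * D * K2 * (1 - \<rho> ^ k) / (real n * \<mu>) * (norm \<theta> + 2 * E / \<mu> + 1 / 2)" for k
  have card_L: "real (card L) = N ^ k"
    using card_lists_length_eq[OF finite_bsubsets, of n b k]
    by (simp add: L_def S_def N_def conj_commute)
  have IH: "(\<Sum>ws\<in>L. norm (F ws - F' ws)) \<le> N ^ k * B k"
    using Suc.IH unfolding L_def S_def F_def F'_def N_def B_def \<rho>_def by simp
  have "(\<Sum>ws\<in>{ws. length ws = Suc k \<and> set ws \<subseteq> S}. norm (F ws - F' ws))
      = (\<Sum>ws\<in>L. \<Sum>w\<in>S. norm (sgd_step gradf xs \<eta> b (F ws) w - sgd_step gradf xs' \<eta> b (F' ws) w))"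
    unfolding L_def S_def F_def F'_def by (simp add: sum_lists_length_Suc finite_bsubsets)
  also have "\<dots> \<le> (\<Sum>ws\<in>L. N * (\<rho> * norm (F ws - F' ws) + \<eta> * C / real n))"
  proof (rule sum_mono)
    fix ws assume "ws \<in> L"
    then have "norm (F' ws) \<le> norm \<theta> + 2 * E / \<mu>"
      unfolding F'_def using norm_sgd_iterate_le[OF b(1) xs'] by (simp add: L_def S_def)
    then show "(\<Sum>w\<in>S. norm (sgd_step gradf xs \<eta> b (F ws) w - sgd_step gradf xs' \<eta> b (F' ws) w))
        \<le> N * (\<rho> * norm (F ws - F' ws) + \<eta> * C / real n)"
      unfolding S_def N_def \<rho>_def C_def by (rule sum_bsubsets_sgd_step_dist_le[OF b xs xs' j])
  qed
  also have "\<dots> = N * \<rho> * (\<Sum>ws\<in>L. norm (F ws - F' ws)) + real (card L) * (N * (\<eta> * C / real n))"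
    by (simp add: distrib_left sum.distrib sum_distrib_left mult.assoc)
  also have "\<dots> = N * \<rho> * (\<Sum>ws\<in>L. norm (F ws - F' ws)) + N ^ Suc k * (\<eta> * C / real n)"
    by (simp add: card_L mult.assoc)
  also have "\<dots> \<le> N * \<rho> * (N ^ k * B k) + N ^ Suc k * (\<eta> * C / real n)"
    using IH eta_mu unfolding \<rho>_def N_def by (intro add_right_mono mult_left_mono) auto
  also have "\<dots> = N ^ Suc k * B (Suc k)"
    using mu_pos b unfolding B_def C_def \<rho>_def by (simp add: field_simps)
  finally show ?case
    unfolding S_def L_def F_def F'_def N_def B_def \<rho>_def by simp
qed

lemma W1_sgd_law_le:
  assumes b: "0 < b" "b \<le> n"
    and xs: "\<forall>i\<in>{1..n}. xs i \<in> X" and xs': "\<forall>i\<in>{1..n}. xs' i \<in> X"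
    and j: "\<forall>i\<in>{1..n}. i \<noteq> j \<longrightarrow> xs i = xs' i"
  shows "W1 (sgd_law gradf xs \<eta> n b \<theta> k) (sgd_law gradf xs' \<eta> n b \<theta> k)
    \<le> ennreal (8 * D * K2 * (1 - (1 - \<eta> * \<mu> / 2) ^ k) / (real n * \<mu>) * (norm \<theta> + 2 * E / \<mu> + 1 / 2))"
proof -
  define L where "L = {ws. length ws = k \<and> set ws \<subseteq> bsubsets n b}"
  define F where "F = foldl (sgd_step gradf xs \<eta> b) \<theta>"
  define F' where "F' = foldl (sgd_step gradf xs' \<eta> b) \<theta>"
  define B where "B = 8 * D * K2 * (1 - (1 - \<eta> * \<mu> / 2) ^ k) / (real n * \<mu>) * (norm \<theta> + 2 * E / \<mu> + 1 / 2)"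
  have "replicate k {1..b} \<in> L"
    using atLeastAtMost_in_bsubsets[OF b(2)] by (simp add: L_def set_replicate_conv_if)
  then have "L \<noteq> {}" by auto
  have "finite L" and card_L: "card L = card (bsubsets n b) ^ k"
    using finite_lists_length_eq[OF finite_bsubsets] card_lists_length_eq[OF finite_bsubsets]
    by (simp_all add: L_def conj_commute)
  have "W1 (sgd_law gradf xs \<eta> n b \<theta> k) (sgd_law gradf xs' \<eta> n b \<theta> k)
      \<le> \<integral>\<^sup>+ ws. ennreal (dist (F ws) (F' ws)) \<partial>measure_pmf (pmf_of_set L)"
    unfolding sgd_law_def L_def F_def F'_def by (rule W1_map_pmf_le)
  also have "\<dots> = (\<Sum>ws\<in>L. ennreal (dist (F ws) (F' ws))) / of_nat (card L)"
    by (rule nn_integral_pmf_of_set[OF \<open>L \<noteq> {}\<close> \<open>finite L\<close>])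
  also have "\<dots> = ennreal ((\<Sum>ws\<in>L. norm (F ws - F' ws)) / real (card L))"
    using \<open>L \<noteq> {}\<close> \<open>finite L\<close>
    by (simp add: dist_norm ennreal_of_nat_eq_real_of_nat divide_ennreal sum_nonneg card_gt_0_iff)
  also have "\<dots> \<le> ennreal B"
  proof (rule ennreal_leI)
    have "(\<Sum>ws\<in>L. norm (F ws - F' ws)) \<le> real (card (bsubsets n b)) ^ k * B"
      using sum_sgd_iterates_dist_le[OF b xs xs' j, where k=k and \<theta>=\<theta>]
      unfolding L_def F_def F'_def B_def .
    then have "(\<Sum>ws\<in>L. norm (F ws - F' ws)) \<le> B * real (card L)"
      by (simp add: card_L mult.commute)
    then show "(\<Sum>ws\<in>L. norm (F ws - F' ws)) / real (card L) \<le> B"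
      using \<open>L \<noteq> {}\<close> \<open>finite L\<close> by (simp add: pos_divide_le_eq card_gt_0_iff)
  qed
  finally show ?thesis unfolding B_def .
qed

end

lemma step_size_conditions:
  fixes \<eta> \<mu> K c :: real
  assumes "0 < \<mu>" "0 \<le> \<eta>" "0 < K" "0 \<le> c" "\<eta> < min (1 / \<mu>) (\<mu> / (K\<^sup>2 + c))"
  shows "\<eta> * \<mu> \<le> 1" and "\<eta> * K\<^sup>2 \<le> \<mu>"
proof -
  show "\<eta> * \<mu> \<le> 1"
    using assms(1,5) by (simp add: field_simps)
  have "0 < K\<^sup>2 + c" "\<eta> < \<mu> / (K\<^sup>2 + c)"
    using assms(3-5) by (simp_all add: add_pos_nonneg)
  then have "\<eta> * (K\<^sup>2 + c) < \<mu>"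
    using pos_less_divide_eq by blast
  moreover have "\<eta> * K\<^sup>2 \<le> \<eta> * (K\<^sup>2 + c)"
    using assms(2,4) by (intro mult_left_mono) auto
  ultimately show "\<eta> * K\<^sup>2 \<le> \<mu>" by linarith
qed

lemma linear_le_quadratic_bound:
  fixes t e m :: real
  assumes "0 \<le> e" "1 + 2 * t\<^sup>2 \<le> m"
  shows "t + 2 * e + 1 / 2 \<le> (2 * e + 1) * m"
proof -
  have "0 \<le> (2 * t - 1 / 2)\<^sup>2" "0 \<le> e * t\<^sup>2"
    using assms(1) by simp_all
  then have "t + 2 * e + 1 / 2 \<le> (2 * e + 1) * (1 + 2 * t\<^sup>2)"
    by (simp add: power2_eq_square algebra_simps)
  also have "\<dots> \<le> (2 * e + 1) * m"
    using assms by (intro mult_left_mono) auto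
  finally show ?thesis .
qed

theorem theorem3p2:
  fixes f :: "'a::euclidean_space \<Rightarrow> 'x::euclidean_space \<Rightarrow> real"
    and gradf :: "'a \<Rightarrow> 'x \<Rightarrow> 'a"
    and X :: "'x set"
    and D E K1 K2 \<mu> \<eta> :: real
    and xs xs' :: "nat \<Rightarrow> 'x"
    and n b k :: nat
    and \<theta> :: 'a
  assumes grad: "\<And>t x. x \<in> X \<Longrightarrow> ((\<lambda>s. f s x) has_derivative (\<lambda>h. gradf t x \<bullet> h)) (at t)"
    and D: "\<forall>x\<in>X. norm x \<le> D"
    and E: "\<forall>x\<in>X. norm (gradf 0 x) \<le> E"
    and K1: "K1 > 0" and K2: "K2 > 0"
    and A1: "\<And>t t' x x'. x \<in> X \<Longrightarrow> x' \<in> X \<Longrightarrow>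
              norm (gradf t x - gradf t' x') \<le> K1 * norm (t - t') + K2 * norm (x - x') * (norm t + norm t' + 1)"
    and mu: "\<mu> > 0"
    and A2: "\<And>t1 t2 x. x \<in> X \<Longrightarrow> (gradf t1 x - gradf t2 x) \<bullet> (t1 - t2) \<ge> \<mu> * (norm (t1 - t2))\<^sup>2"
    and xs: "\<forall>i\<in>{1..n}. xs i \<in> X" and xs': "\<forall>i\<in>{1..n}. xs' i \<in> X"
    and differ: "\<exists>j. \<forall>i\<in>{1..n}. i \<noteq> j \<longrightarrow> xs i = xs' i"
    and b: "b \<in> {1..n}"
    and eta_pos: "\<eta> > 0"
    and eta: "\<eta> < min (1 / \<mu>) (\<mu> / (K1\<^sup>2 + 64 * D\<^sup>2 * K2\<^sup>2))"
  shows "W1 (sgd_law gradf xs \<eta> n b \<theta> k) (sgd_law gradf xs' \<eta> n b \<theta> k)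
    \<le> ennreal (8 * D * K2 * (1 - (1 - \<eta> * \<mu> / 2) ^ k) / (real n * \<mu>) * (2 * E / \<mu> + 1) *
         max (1 + 2 * (norm \<theta>)\<^sup>2 + 2 * E\<^sup>2 / \<mu>\<^sup>2)
             (2 - \<eta> / \<mu> * K1\<^sup>2 - 56 * \<eta> / \<mu> * D\<^sup>2 * K2\<^sup>2 + 64 * \<eta> / \<mu> ^ 3 * D\<^sup>2 * K2\<^sup>2 * E\<^sup>2))"
    (is "_ \<le> ennreal (?c * (2 * E / \<mu> + 1) * ?m)")
proof -
  obtain j where j: "\<forall>i\<in>{1..n}. i \<noteq> j \<longrightarrow> xs i = xs' i" using differ by blast
  have b: "0 < b" "b \<le> n" using b by auto
  interpret strongly_monotone_sgd gradf X D E K1 K2 \<mu> \<eta>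
    using D E K2 A1 mu A2 eta_pos xs b step_size_conditions[OF mu _ K1 _ eta]
    by unfold_locales fastforce+
  have "0 \<le> (1 - \<eta> * \<mu> / 2) ^ k" "(1 - \<eta> * \<mu> / 2) ^ k \<le> 1"
    using eta_pos mu eta_mu by (simp_all add: power_le_one)
  then have c_nonneg: "0 \<le> ?c"
    using D_nonneg K2 mu by simp
  have "1 + 2 * (norm \<theta>)\<^sup>2 \<le> ?m"
    by (rule max.coboundedI1) simp
  then have "norm \<theta> + 2 * E / \<mu> + 1 / 2 \<le> (2 * E / \<mu> + 1) * ?m"
    using linear_le_quadratic_bound[of "E / \<mu>"] E_nonneg mu by simp
  from mult_left_mono[OF this c_nonneg]
  have "?c * (norm \<theta> + 2 * E / \<mu> + 1 / 2) \<le> ?c * (2 * E / \<mu> + 1) * ?m"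
    by (simp only: mult.assoc)
  with W1_sgd_law_le[OF b xs xs' j] show ?thesis
    using ennreal_leI order_trans by blast
qed

end
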